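(* Let $\lambda\ge0$ and let $\gamma$ be non-decreasing with $\gamma\in L^2(0,1)$, $\int_0^1\gamma=1$ and $\gamma\not\equiv1$. Then the problem $$\sup_{h\in\mathcal M^{-1}(\mu,\sigma)}\int_0^1\big(\gamma(u)+\lambda F^{-1}(u)\big)h(u)\,du$$ has the unique solution $$h_\lambda(u)=\mu+\sigma\,\frac{\gamma(u)+\lambda F^{-1}(u)-a_\lambda}{b_\lambda},\qquad 0<u<1,$$ where $a_\lambda=\mathbb E(\gamma(U)+\lambda F^{-1}(U))$ and $b_\lambda=\operatorname{std}(\gamma(U)+\lambda F^{-1}(U))$. Moreover, $\lambda\mapsto\operatorname{corr}(F^{-1}(U),h_\lambda(U))$ is continuous on $[0,\infty)$.
   Context: $U\sim\mathcal U(0,1)$. $F$ is a distribution function on $\mathbb R$ with finite second moment, and $F^{-1}(u)=\inf\{y:F(y)\ge u\}$. For $\mu\in\mathbb R$ and $\sigma>0$, $\mathcal M^{-1}(\mu,\sigma)$ is the set of quantile functions (left-continuous inverses) of distribution functions on $\mathbb R$ with mean $\mu$ and variance $\sigma^2$. *)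

theory Defs
  imports "HOL-Probability.Probability"
begin

definition quantile :: "(real \<Rightarrow> real) \<Rightarrow> real \<Rightarrow> real" where
  "quantile F u = Inf {y. u \<le> F y}"

text \<open>Moments of f(U) for U uniform on (0,1).\<close>
definition uE :: "(real \<Rightarrow> real) \<Rightarrow> real" where
  "uE f = (LINT u:{0<..<1}|lborel. f u)"

definition uVar :: "(real \<Rightarrow> real) \<Rightarrow> real" where
  "uVar f = uE (\<lambda>u. (f u - uE f)^2)"

definition uStd :: "(real \<Rightarrow> real) \<Rightarrow> real" where
  "uStd f = sqrt (uVar f)"

definition uCov :: "(real \<Rightarrow> real) \<Rightarrow> (real \<Rightarrow> real) \<Rightarrow> real" where
  "uCov f g = uE (\<lambda>u. (f u - uE f) * (g u - uE g))"

definition uCorr :: "(real \<Rightarrow> real) \<Rightarrow> (real \<Rightarrow> real) \<Rightarrow> real" where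
  "uCorr f g = uCov f g / (uStd f * uStd g)"

definition Mset :: "real \<Rightarrow> real \<Rightarrow> (real \<Rightarrow> real) set" where
  "Mset \<mu> \<sigma> = {h. \<exists>N. real_distribution N \<and> integrable N (\<lambda>x. x^2) \<and>
      (\<integral>x. x \<partial>N) = \<mu> \<and> (\<integral>x. (x - \<mu>)^2 \<partial>N) = \<sigma>^2 \<and>
      (\<forall>u\<in>{0<..<1}. h u = quantile (cdf N) u)}"

definition hsol :: "(real \<Rightarrow> real) \<Rightarrow> (real \<Rightarrow> real) \<Rightarrow> real \<Rightarrow> real \<Rightarrow> real \<Rightarrow> real \<Rightarrow> real" where
  "hsol \<gamma> Q \<mu> \<sigma> l u =
     \<mu> + \<sigma> * (\<gamma> u + l * Q u - uE (\<lambda>v. \<gamma> v + l * Q v)) / uStd (\<lambda>v. \<gamma> v + l * Q v)"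

end

theory Submission
  imports Defs
begin

text \<open>
  Put Z = \<gamma>(U) + \<lambda> F^-1(U). Every h in M^-1(\<mu>, \<sigma>) has mean \<mu> and variance \<sigma>^2, so
  E[Z h(U)] = \<mu> E Z + Cov(Z, h(U)) \<le> \<mu> E Z + \<sigma> std Z by Cauchy-Schwarz, with equality exactly
  when h(U) is the positive affine image of Z with these two moments, i.e. when h = h_\<lambda> a.e.
  Here std Z > 0: \<gamma> and F^-1 are non-decreasing, \<lambda> \<ge> 0, and a non-decreasing function that is
  a.e. constant on (0,1) is constant, which \<gamma> is not. The bound is attained in M^-1(\<mu>, \<sigma>)
  because h_\<lambda> is non-decreasing, and a non-decreasing function agrees a.e. with the quantile
  function of its own law under U. Finally corr(F^-1(U), h_\<lambda>(U)) = corr(F^-1(U), Z), whose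
  numerator is affine and whose squared denominator is a positive quadratic in \<lambda>.
\<close>

section \<open>The uniform distribution on (0,1)\<close>

definition uniform01 :: "real measure" where
  "uniform01 = restrict_space lborel {0<..<1}"

lemma space_uniform01 [simp]: "space uniform01 = {0<..<1}"
  by (simp add: uniform01_def space_restrict_space)

lemma sets_uniform01: "sets uniform01 = sets (restrict_space borel {0<..<1::real})"
  by (simp add: uniform01_def sets_restrict_space)

lemma sets_uniform01_subset: "A \<in> sets borel \<Longrightarrow> A \<subseteq> {0<..<1} \<Longrightarrow> A \<in> sets uniform01"
  by (auto simp: sets_uniform01 sets_restrict_space_iff)

lemma measure_uniform01: "A \<in> sets borel \<Longrightarrow> A \<subseteq> {0<..<1} \<Longrightarrow> measure uniform01 A = measure lborel A"
  unfolding uniform01_def by (subst measure_restrict_space) (auto simp: Int_absorb2)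

interpretation uniform01: prob_space uniform01
  unfolding uniform01_def
  by (auto simp: emeasure_restrict_space space_restrict_space intro!: prob_spaceI)

lemma measure_uniform01_space [simp]: "measure uniform01 {0<..<1} = 1"
  using uniform01.prob_space by simp

lemma uE_eq_integral: "uE f = integral\<^sup>L uniform01 f"
  unfolding uE_def uniform01_def set_lebesgue_integral_def
  by (subst integral_restrict_space) auto

lemma set_integrable_iff_integrable_uniform01:
  "set_integrable lborel {0<..<1} f \<longleftrightarrow> integrable uniform01 (f :: real \<Rightarrow> real)"
  unfolding set_integrable_def uniform01_def
  by (subst integrable_restrict_space) auto

lemma AE_uniform01_iff: "(AE u in lborel. u \<in> {0<..<1} \<longrightarrow> P u) \<longleftrightarrow> (AE u in uniform01. P u)"
  unfolding uniform01_def by (subst AE_restrict_space_iff) auto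

lemma mono_on_borel_measurable_uniform01:
  "mono_on {0<..<1} f \<Longrightarrow> (f :: real \<Rightarrow> real) \<in> borel_measurable uniform01"
  using borel_measurable_mono_on_fnc[of "{0<..<1}" f]
  by (simp add: measurable_cong_sets[OF sets_uniform01 refl])

section \<open>Square-integrable functions of U and their moments\<close>

definition uL2 :: "(real \<Rightarrow> real) \<Rightarrow> bool" where
  "uL2 f \<longleftrightarrow> f \<in> borel_measurable uniform01 \<and> integrable uniform01 (\<lambda>x. (f x)^2)"

lemma uL2_const [simp, intro]: "uL2 (\<lambda>x. c)"
  by (simp add: uL2_def)

lemma uL2_integrable_mult:
  assumes "uL2 f" "uL2 g" shows "integrable uniform01 (\<lambda>x. f x * g x)"
proof (rule Bochner_Integration.integrable_bound)
  show "integrable uniform01 (\<lambda>x. (f x)^2 + (g x)^2)" using assms by (auto simp: uL2_def)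
  show "(\<lambda>x. f x * g x) \<in> borel_measurable uniform01" using assms by (auto simp: uL2_def)
  have "\<bar>f x * g x\<bar> \<le> (f x)^2 + (g x)^2" for x
  proof -
    have "2 * (\<bar>f x\<bar> * \<bar>g x\<bar>) \<le> (f x)^2 + (g x)^2"
      using sum_squares_bound[of "\<bar>f x\<bar>" "\<bar>g x\<bar>"] by (simp add: mult.assoc)
    moreover have "0 \<le> \<bar>f x\<bar> * \<bar>g x\<bar>" by simp
    ultimately show ?thesis unfolding abs_mult by linarith
  qed
  then show "AE x in uniform01. norm (f x * g x) \<le> norm ((f x)^2 + (g x)^2)" by simp
qed

lemma uL2_integrable: "uL2 f \<Longrightarrow> integrable uniform01 f"
  using uL2_integrable_mult[of f "\<lambda>_. 1"] by simp

lemma uL2_add [intro]: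
  assumes "uL2 f" "uL2 g" shows "uL2 (\<lambda>x. f x + g x)"
proof -
  have "(\<lambda>x. (f x + g x)^2) = (\<lambda>x. (f x)^2 + 2 * (f x * g x) + (g x)^2)"
    by (simp add: fun_eq_iff power2_eq_square algebra_simps)
  then show ?thesis
    using assms uL2_integrable_mult[OF assms] by (auto simp: uL2_def)
qed

lemma uL2_cmult [intro]: "uL2 f \<Longrightarrow> uL2 (\<lambda>x. c * f x)"
  unfolding uL2_def power_mult_distrib by auto

lemma uL2_diff [intro]: "uL2 f \<Longrightarrow> uL2 g \<Longrightarrow> uL2 (\<lambda>x. f x - g x)"
  using uL2_add[OF _ uL2_cmult, of f g "-1"] by simp

lemma uE_cong: "(\<And>u. u \<in> {0<..<1} \<Longrightarrow> f u = g u) \<Longrightarrow> uE f = uE g"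
  unfolding uE_eq_integral by (rule Bochner_Integration.integral_cong) auto

lemma uVar_cong: "(\<And>u. u \<in> {0<..<1} \<Longrightarrow> f u = g u) \<Longrightarrow> uVar f = uVar g"
  unfolding uVar_def by (metis (mono_tags, lifting) uE_cong)

lemma uL2_cong: "(\<And>u. u \<in> {0<..<1} \<Longrightarrow> f u = g u) \<Longrightarrow> uL2 f \<longleftrightarrow> uL2 g"
  unfolding uL2_def
  by (intro conj_cong measurable_cong Bochner_Integration.integrable_cong) auto

lemma uE_affine: "uL2 f \<Longrightarrow> uE (\<lambda>u. a + b * f u) = a + b * uE f"
  by (simp add: uE_eq_integral uL2_integrable)

lemma uVar_nonneg: "0 \<le> uVar f"
  by (simp add: uVar_def uE_eq_integral)

lemma uVar_eq_uCov: "uVar f = uCov f f"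
  by (simp add: uVar_def uCov_def power2_eq_square)

lemma uCov_commute: "uCov f g = uCov g f"
  by (simp add: uCov_def mult.commute)

lemma uCov_eq_uE_mult:
  assumes "uL2 f" "uL2 g"
  shows "uCov f g = uE (\<lambda>u. f u * g u) - uE f * uE g"
proof -
  have "(\<lambda>u. (f u - uE f) * (g u - uE g)) = (\<lambda>u. f u * g u - uE g * f u - uE f * g u + uE f * uE g)"
    by (simp add: fun_eq_iff algebra_simps)
  then show ?thesis
    using assms uL2_integrable_mult[OF assms]
    by (simp add: uCov_def uE_eq_integral uL2_integrable)
qed

lemma uCov_lin_comb:
  assumes "uL2 f" "uL2 g" "uL2 h"
  shows "uCov f (\<lambda>u. a * g u + b * h u) = a * uCov f g + b * uCov f h"
proof -
  have "(\<lambda>u. f u * (a * g u + b * h u)) = (\<lambda>u. a * (f u * g u) + b * (f u * h u))"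
    by (simp add: fun_eq_iff algebra_simps)
  moreover have "uL2 (\<lambda>u. a * g u + b * h u)"
    using assms by (intro uL2_add uL2_cmult)
  ultimately show ?thesis
    using assms uL2_integrable_mult[of f g] uL2_integrable_mult[of f h]
    by (simp add: uCov_eq_uE_mult uE_eq_integral uL2_integrable algebra_simps)
qed

lemma uCov_const_right [simp]: "uCov f (\<lambda>u. c) = 0"
  by (simp add: uCov_def uE_eq_integral)

lemma uCov_affine: "uL2 f \<Longrightarrow> uL2 g \<Longrightarrow> uCov f (\<lambda>u. a + b * g u) = b * uCov f g"
  using uCov_lin_comb[of f "\<lambda>_. 1" g a b] by simp

lemma uVar_lin_comb:
  assumes "uL2 f" "uL2 g"
  shows "uVar (\<lambda>u. a * f u + b * g u) = a^2 * uVar f + 2 * a * b * uCov f g + b^2 * uVar g"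
proof -
  define C where "C u = a * f u + b * g u" for u
  have "uL2 C"
    unfolding C_def[abs_def] using assms by (intro uL2_add uL2_cmult)
  have "uVar C = a * uCov C f + b * uCov C g"
    using uCov_lin_comb[OF \<open>uL2 C\<close> assms] by (simp add: uVar_eq_uCov C_def[abs_def])
  also have "\<dots> = a * uCov f C + b * uCov g C"
    by (simp add: uCov_commute)
  also have "\<dots> = a * (a * uVar f + b * uCov f g) + b * (a * uCov f g + b * uVar g)"
    using uCov_lin_comb[OF assms(1) assms] uCov_lin_comb[OF assms(2) assms]
    by (simp add: C_def[abs_def] uVar_eq_uCov uCov_commute[of g f])
  finally show ?thesis
    by (simp add: C_def[abs_def] power2_eq_square algebra_simps)
qed

lemma uVar_eq_0_imp_AE_eq:
  assumes "uL2 f" "uVar f = 0"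
  shows "AE u in uniform01. f u = uE f"
proof -
  have "integrable uniform01 (\<lambda>u. (f u - uE f)^2)"
    using assms(1) uL2_diff[OF _ uL2_const] by (auto simp: uL2_def)
  then have "AE u in uniform01. (f u - uE f)^2 = 0"
    using assms(2) integral_nonneg_eq_0_iff_AE[of uniform01 "\<lambda>u. (f u - uE f)^2"]
    by (simp add: uVar_def uE_eq_integral)
  then show ?thesis by eventually_elim simp
qed

section \<open>Cauchy-Schwarz and the optimal rescaling\<close>

lemma uCov_le_uStd_mult:
  assumes f: "uL2 f" and g: "uL2 g" and "uVar f > 0" "uVar g > 0"
  shows "uCov f g \<le> uStd f * uStd g"
    and "uCov f g = uStd f * uStd g \<Longrightarrow> AE u in uniform01. g u = uE g + uStd g / uStd f * (f u - uE f)"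
proof -
  define s t where "s = uStd f" and "t = uStd g"
  have st: "s > 0" "t > 0" "s^2 = uVar f" "t^2 = uVar g"
    using assms(3,4) by (auto simp: s_def t_def uStd_def)
  define D where "D u = t * f u + (- s) * g u" for u
  have D: "uL2 D"
    unfolding D_def[abs_def] using f g by (intro uL2_add uL2_cmult)
  have varD: "uVar D = 2 * s * t * (s * t - uCov f g)"
    using uVar_lin_comb[OF f g, of t "- s"] unfolding st(3,4)[symmetric] D_def[abs_def]
    by (simp add: power2_eq_square algebra_simps)
  with uVar_nonneg[of D] mult_pos_pos[OF st(1,2)] show "uCov f g \<le> s * t"
    by (auto simp: zero_le_mult_iff)
  assume "uCov f g = s * t"
  then have "AE u in uniform01. D u = uE D"
    using varD uVar_eq_0_imp_AE_eq[OF D] by simp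
  then show "AE u in uniform01. g u = uE g + t / s * (f u - uE f)"
  proof eventually_elim
    case (elim u)
    moreover have "uE D = t * uE f - s * uE g"
      using f g by (simp add: D_def[abs_def] uE_eq_integral uL2_integrable)
    ultimately have "s * g u = s * uE g + t * (f u - uE f)"
      by (simp add: D_def algebra_simps)
    then show ?case
      using st(1) by (simp add: field_simps)
  qed
qed

definition rescale :: "real \<Rightarrow> real \<Rightarrow> (real \<Rightarrow> real) \<Rightarrow> real \<Rightarrow> real" where
  "rescale \<mu> \<sigma> Z u = \<mu> + \<sigma> * (Z u - uE Z) / uStd Z"

lemma rescale_eq_affine:
  "rescale \<mu> \<sigma> Z = (\<lambda>u. (\<mu> - \<sigma> / uStd Z * uE Z) + \<sigma> / uStd Z * Z u)"
  by (simp add: fun_eq_iff rescale_def diff_divide_distrib right_diff_distrib)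

lemma uL2_rescale: "uL2 Z \<Longrightarrow> uL2 (rescale \<mu> \<sigma> Z)"
  unfolding rescale_eq_affine by (intro uL2_add uL2_cmult uL2_const)

lemma mono_on_rescale: "mono_on S Z \<Longrightarrow> 0 \<le> \<sigma> \<Longrightarrow> mono_on S (rescale \<mu> \<sigma> Z)"
  unfolding rescale_def uStd_def
  by (intro mono_onI add_left_mono divide_right_mono mult_left_mono diff_right_mono)
    (auto dest: mono_onD simp: uVar_nonneg)

lemma uE_rescale: "uL2 Z \<Longrightarrow> uE (rescale \<mu> \<sigma> Z) = \<mu>"
  unfolding rescale_eq_affine by (subst uE_affine) auto

lemma uCov_rescale: "uL2 f \<Longrightarrow> uL2 Z \<Longrightarrow> uCov f (rescale \<mu> \<sigma> Z) = \<sigma> / uStd Z * uCov f Z"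
  unfolding rescale_eq_affine by (subst uCov_affine) auto

lemma uVar_rescale:
  assumes "uL2 Z" "uVar Z > 0"
  shows "uVar (rescale \<mu> \<sigma> Z) = \<sigma>^2"
proof -
  have "uVar (rescale \<mu> \<sigma> Z) = \<sigma> / uStd Z * uCov Z (rescale \<mu> \<sigma> Z)"
    using uCov_rescale[OF uL2_rescale[OF assms(1)] assms(1)]
    by (simp add: uVar_eq_uCov uCov_commute[of Z])
  also have "\<dots> = (\<sigma> / uStd Z)^2 * uVar Z"
    using assms(1) by (simp add: uCov_rescale uVar_eq_uCov power2_eq_square)
  also have "\<dots> = \<sigma>^2"
    using assms(2) by (simp add: uStd_def power_divide)
  finally show ?thesis .
qed

lemma uStd_rescale: "uL2 Z \<Longrightarrow> uVar Z > 0 \<Longrightarrow> 0 \<le> \<sigma> \<Longrightarrow> uStd (rescale \<mu> \<sigma> Z) = \<sigma>"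
  by (simp add: uStd_def uVar_rescale)

lemma uCorr_rescale:
  assumes "uL2 f" "uL2 Z" "uVar Z > 0" "\<sigma> > 0"
  shows "uCorr f (rescale \<mu> \<sigma> Z) = uCorr f Z"
  using assms by (simp add: uCorr_def uCov_rescale uStd_rescale)

lemma rescale_maximizes_uE_mult:
  assumes Z: "uL2 Z" "uVar Z > 0" and "\<sigma> > 0"
    and g: "uL2 g" "uE g = \<mu>" "uVar g = \<sigma>^2"
  shows "uE (\<lambda>u. Z u * g u) \<le> uE (\<lambda>u. Z u * rescale \<mu> \<sigma> Z u)"
    and "uE (\<lambda>u. Z u * g u) = uE (\<lambda>u. Z u * rescale \<mu> \<sigma> Z u) \<Longrightarrow>
      AE u in uniform01. g u = rescale \<mu> \<sigma> Z u"
proof -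
  have std_g: "uStd g = \<sigma>"
    using g(3) \<open>\<sigma> > 0\<close> by (simp add: uStd_def)
  have var_g: "uVar g > 0"
    using g(3) \<open>\<sigma> > 0\<close> by simp
  have "uCov Z (rescale \<mu> \<sigma> Z) = \<sigma> / uStd Z * uVar Z"
    using Z by (simp add: uCov_rescale uVar_eq_uCov)
  also have "\<dots> = uStd Z * uStd g"
    using Z(2) std_g by (simp add: uStd_def field_simps)
  finally have cov_r: "uCov Z (rescale \<mu> \<sigma> Z) = uStd Z * uStd g" .
  have split: "uE (\<lambda>u. Z u * h u) = uCov Z h + uE Z * \<mu>" if "uL2 h" "uE h = \<mu>" for h
    using uCov_eq_uE_mult[OF Z(1) that(1)] that(2) by simp
  note split_g = split[OF g(1,2)] and split_r = split[OF uL2_rescale[OF Z(1)] uE_rescale[OF Z(1)]]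
  show "uE (\<lambda>u. Z u * g u) \<le> uE (\<lambda>u. Z u * rescale \<mu> \<sigma> Z u)"
    using uCov_le_uStd_mult(1)[OF Z(1) g(1) Z(2) var_g] by (simp add: split_g split_r cov_r)
  assume "uE (\<lambda>u. Z u * g u) = uE (\<lambda>u. Z u * rescale \<mu> \<sigma> Z u)"
  then have "uCov Z g = uStd Z * uStd g"
    by (simp add: split_g split_r cov_r)
  then have "AE u in uniform01. g u = \<mu> + \<sigma> / uStd Z * (Z u - uE Z)"
    using uCov_le_uStd_mult(2)[OF Z(1) g(1) Z(2) var_g] by (simp add: std_g g(2))
  then show "AE u in uniform01. g u = rescale \<mu> \<sigma> Z u"
    by eventually_elim (simp add: rescale_def)
qed

section \<open>Quantile functions\<close>

lemma uL2_moments_distr: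
  assumes f: "f \<in> borel_measurable uniform01"
  defines "N \<equiv> distr uniform01 borel f"
  shows "uL2 f \<longleftrightarrow> integrable N (\<lambda>x. x^2)"
    and "uE f = (\<integral>x. x \<partial>N)"
    and "uE (\<lambda>u. (f u - c)^2) = (\<integral>x. (x - c)^2 \<partial>N)"
  using f integrable_distr_eq[OF f, of "\<lambda>x. x^2"] integral_distr[OF f, of "\<lambda>x. x"]
    integral_distr[OF f, of "\<lambda>x. (x - c)^2"]
  by (simp_all add: uL2_def N_def uE_eq_integral)

lemma quantile_cdf_distr:
  assumes "real_distribution N"
  shows "mono_on {0<..<1} (quantile (cdf N))"
    and "distr uniform01 borel (quantile (cdf N)) = N"
proof -
  interpret cdf_distribution N
    using assms by (rule cdf_distribution.intro)
  have q: "quantile (cdf N) = (\<lambda>w. Inf {x. w \<le> cdf N x})"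
    by (simp add: fun_eq_iff quantile_def)
  show "mono_on {0<..<1} (quantile (cdf N))"
    unfolding q by (rule mono_I)
  show "distr uniform01 borel (quantile (cdf N)) = N"
    unfolding q uniform01_def by (rule distr_I_eq_M)
qed

lemma Mset_moments:
  assumes "g \<in> Mset \<mu> \<sigma>"
  shows "uL2 g" and "uE g = \<mu>" and "uVar g = \<sigma>^2"
proof -
  obtain N where N: "real_distribution N" "integrable N (\<lambda>x. x^2)"
    "(\<integral>x. x \<partial>N) = \<mu>" "(\<integral>x. (x - \<mu>)^2 \<partial>N) = \<sigma>^2"
    and g: "\<And>u. u \<in> {0<..<1} \<Longrightarrow> g u = quantile (cdf N) u"
    using assms unfolding Mset_def by blast
  note q = quantile_cdf_distr[OF N(1)]
  note moments = uL2_moments_distr[OF mono_on_borel_measurable_uniform01[OF q(1)], unfolded q(2)]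
  show "uL2 g"
    using uL2_cong[OF g] moments(1) N(2) by simp
  show "uE g = \<mu>"
    using uE_cong[OF g] moments(2) N(3) by simp
  moreover have "uVar g = uVar (quantile (cdf N))"
    using g by (rule uVar_cong)
  ultimately show "uVar g = \<sigma>^2"
    using uE_cong[OF g] moments(3)[of \<mu>] N(4) by (simp add: uVar_def)
qed

lemma quantile_cdf_distr_mono_on:
  fixes f :: "real \<Rightarrow> real"
  assumes mono: "mono_on {0<..<1} f" and u: "u \<in> {0<..<1}" "isCont f u"
  shows "quantile (cdf (distr uniform01 borel f)) u = f u"
proof -
  have f: "f \<in> borel_measurable uniform01"
    using mono by (rule mono_on_borel_measurable_uniform01)
  define below where "below y = {v \<in> {0<..<1}. f v \<le> y}" for y
  have below_sets: "below y \<in> sets uniform01" for y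
    using measurable_sets[OF f atMost_borel, of y] by (simp add: below_def vimage_def Int_def conj_commute)
  have cdf_eq: "cdf (distr uniform01 borel f) y = measure uniform01 (below y)" for y
    unfolding cdf_def using measure_distr[OF f, of "{..y}"]
    by (simp add: below_def vimage_def Int_def conj_commute)
  have interval: "measure uniform01 {0<..w} = w" "{0<..w} \<in> sets uniform01" if "w \<in> {0<..<1}" for w
  proof -
    have "{0<..w} \<subseteq> {0<..<1}"
      using that by auto
    then show "measure uniform01 {0<..w} = w" "{0<..w} \<in> sets uniform01"
      using that by (simp_all add: measure_uniform01 sets_uniform01_subset)
  qed
  show ?thesis
    unfolding quantile_def
  proof (rule cInf_eq_minimum)
    have "{0<..u} \<subseteq> below (f u)"
      using u(1) by (auto simp: below_def intro: mono_onD[OF mono])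
    then have "u \<le> measure uniform01 (below (f u))"
      using uniform01.finite_measure_mono[OF _ below_sets] interval[OF u(1)] by metis
    then show "f u \<in> {y. u \<le> cdf (distr uniform01 borel f) y}"
      by (simp add: cdf_eq)
  next
    fix y assume "y \<in> {y. u \<le> cdf (distr uniform01 borel f) y}"
    then have uy: "u \<le> measure uniform01 (below y)"
      by (simp add: cdf_eq)
    show "f u \<le> y"
    proof (rule ccontr)
      assume "\<not> f u \<le> y"
      then have "eventually (\<lambda>w. y < f w) (at_left u)"
        using u(2) by (intro order_tendstoD(1)) (auto simp: isCont_def filterlim_at_split)
      then obtain b where b: "b < u" "\<And>z. b < z \<Longrightarrow> z < u \<Longrightarrow> y < f z"
        unfolding eventually_at_left_field by blast
      define w where "w = (max b 0 + u) / 2"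
      have w: "w \<in> {0<..<1}" "w < u" "y < f w"
        using b u(1) by (auto simp: w_def)
      have "below y \<subseteq> {0<..w}"
        using w mono_onD[OF mono, of w] by (force simp: below_def)
      then have "measure uniform01 (below y) \<le> w"
        using uniform01.finite_measure_mono[OF _ interval(2)[OF w(1)]] interval(1)[OF w(1)] by metis
      then show False
        using uy w(2) by simp
    qed
  qed
qed

lemma AE_isCont_mono_on:
  fixes f :: "real \<Rightarrow> real"
  assumes "mono_on {0<..<1} f"
  shows "AE u in uniform01. isCont f u"
proof -
  have "countable {u \<in> {0<..<1}. \<not> isCont f u}"
    using assms by (intro mono_on_ctble_discont_open) auto
  then have "AE u in lborel. u \<notin> {u \<in> {0<..<1}. \<not> isCont f u}"
    by (intro AE_not_in countable_imp_null_set_lborel)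
  then show ?thesis
    unfolding AE_uniform01_iff[symmetric] by eventually_elim auto
qed

lemma mono_on_AE_eq_Mset:
  fixes f :: "real \<Rightarrow> real"
  assumes mono: "mono_on {0<..<1} f" and "uL2 f" "uE f = \<mu>" "uVar f = \<sigma>^2"
  shows "\<exists>h\<in>Mset \<mu> \<sigma>. AE u in uniform01. h u = f u"
proof
  define N where "N = distr uniform01 borel f"
  have f: "f \<in> borel_measurable uniform01"
    using mono by (rule mono_on_borel_measurable_uniform01)
  note moments = uL2_moments_distr[OF f, folded N_def]
  show "quantile (cdf N) \<in> Mset \<mu> \<sigma>"
    unfolding Mset_def
  proof (intro CollectI exI[of _ N] conjI ballI refl)
    show "real_distribution N"
      using f by (auto simp: N_def real_distribution_def real_distribution_axioms_def
        intro: uniform01.prob_space_distr)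
    show "integrable N (\<lambda>x. x^2)" "(\<integral>x. x \<partial>N) = \<mu>" "(\<integral>x. (x - \<mu>)^2 \<partial>N) = \<sigma>^2"
      using assms(2-4) moments moments(3)[of \<mu>] by (simp_all add: uVar_def)
  qed
  show "AE u in uniform01. quantile (cdf N) u = f u"
    using AE_isCont_mono_on[OF mono] AE_space[of uniform01]
    by eventually_elim (auto simp: N_def intro: quantile_cdf_distr_mono_on[OF mono])
qed

lemma rescale_solves_Mset_problem:
  fixes Z :: "real \<Rightarrow> real"
  assumes Z: "uL2 Z" "mono_on {0<..<1} Z" "uVar Z > 0" and "\<sigma> > 0"
  shows "\<exists>h\<in>Mset \<mu> \<sigma>. AE u in uniform01. h u = rescale \<mu> \<sigma> Z u"
    and "g \<in> Mset \<mu> \<sigma> \<Longrightarrow> uE (\<lambda>u. Z u * g u) \<le> uE (\<lambda>u. Z u * rescale \<mu> \<sigma> Z u)"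
    and "g \<in> Mset \<mu> \<sigma> \<Longrightarrow> uE (\<lambda>u. Z u * g u) = uE (\<lambda>u. Z u * rescale \<mu> \<sigma> Z u) \<Longrightarrow>
      AE u in uniform01. g u = rescale \<mu> \<sigma> Z u"
proof -
  show "\<exists>h\<in>Mset \<mu> \<sigma>. AE u in uniform01. h u = rescale \<mu> \<sigma> Z u"
    using assms by (intro mono_on_AE_eq_Mset mono_on_rescale uL2_rescale uE_rescale uVar_rescale) auto
  show "uE (\<lambda>u. Z u * g u) \<le> uE (\<lambda>u. Z u * rescale \<mu> \<sigma> Z u)" if "g \<in> Mset \<mu> \<sigma>"
    using rescale_maximizes_uE_mult(1)[OF Z(1,3) \<open>\<sigma> > 0\<close> Mset_moments[OF that]] .
  show "AE u in uniform01. g u = rescale \<mu> \<sigma> Z u"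
    if "g \<in> Mset \<mu> \<sigma>" "uE (\<lambda>u. Z u * g u) = uE (\<lambda>u. Z u * rescale \<mu> \<sigma> Z u)"
    using rescale_maximizes_uE_mult(2)[OF Z(1,3) \<open>\<sigma> > 0\<close> Mset_moments[OF that(1)] that(2)] .
qed

section \<open>Non-degeneracy and continuity in the parameter\<close>

lemma mono_on_AE_const_imp_const:
  fixes f :: "real \<Rightarrow> real"
  assumes mono: "mono_on {0<..<1} f" and ae: "AE u in uniform01. f u = c" and x: "x \<in> {0<..<1}"
  shows "f x = c"
proof (rule ccontr)
  assume "f x \<noteq> c"
  then consider "f x < c" | "c < f x" by linarith
  then obtain A where A: "A \<in> sets borel" "A \<subseteq> {0<..<1}" "measure lborel A > 0"
    and ne: "\<And>v. v \<in> A \<Longrightarrow> f v \<noteq> c"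
  proof cases
    case 1
    have "f v \<noteq> c" if "v \<in> {0<..x}" for v
      using mono_onD[OF mono, of v x] that x 1 by auto
    then show thesis
      using x by (intro that[of "{0<..x}"]) auto
  next
    case 2
    have "f v \<noteq> c" if "v \<in> {x..<1}" for v
      using mono_onD[OF mono, of x v] that x 2 by auto
    then show thesis
      using x by (intro that[of "{x..<1}"]) auto
  qed
  have "AE u in uniform01. u \<notin> A"
    using ae by eventually_elim (use ne in blast)
  then have "A \<in> null_sets uniform01"
    using AE_iff_null_sets sets_uniform01_subset[OF A(1,2)] by blast
  then show False
    using A measure_uniform01[OF A(1,2)] by (simp add: measure_eq_0_null_sets)
qed

lemma mono_on_add_eq_imp_eq:
  fixes f g :: "'a::linorder \<Rightarrow> real"
  assumes f: "mono_on S f" and g: "mono_on S g" and "x \<in> S" "y \<in> S"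
    and "f x + g x = f y + g y"
  shows "f x = f y"
proof (cases "x \<le> y")
  case True
  then show ?thesis
    using assms mono_onD[OF f \<open>x \<in> S\<close> \<open>y \<in> S\<close>] mono_onD[OF g \<open>x \<in> S\<close> \<open>y \<in> S\<close>]
    by linarith
next
  case False
  then have "y \<le> x"
    by simp
  then show ?thesis
    using assms mono_onD[OF f \<open>y \<in> S\<close> \<open>x \<in> S\<close>] mono_onD[OF g \<open>y \<in> S\<close> \<open>x \<in> S\<close>]
    by linarith
qed

lemma mono_on_pencil:
  fixes g h :: "'a::order \<Rightarrow> real"
  assumes "mono_on S g" "mono_on S h" "0 \<le> l"
  shows "mono_on S (\<lambda>u. g u + l * h u)"
  using assms by (auto intro!: mono_onI add_mono mult_left_mono dest: mono_onD)

lemma uVar_pos_if_mono_on: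
  fixes f :: "real \<Rightarrow> real"
  assumes "uL2 f" "mono_on {0<..<1} f" "x \<in> {0<..<1}" "y \<in> {0<..<1}" "f x \<noteq> f y"
  shows "uVar f > 0"
proof (rule ccontr)
  assume "\<not> uVar f > 0"
  then have "AE u in uniform01. f u = uE f"
    using uVar_nonneg[of f] uVar_eq_0_imp_AE_eq[OF assms(1)] by simp
  then have "f x = uE f" "f y = uE f"
    using mono_on_AE_const_imp_const[OF assms(2)] assms(3,4) by blast+
  with assms(5) show False
    by simp
qed

lemma uVar_pencil_pos:
  fixes g h :: "real \<Rightarrow> real"
  assumes "uL2 g" "uL2 h" and mono: "mono_on {0<..<1} g" "mono_on {0<..<1} h" and "0 \<le> l"
    and xy: "x \<in> {0<..<1}" "y \<in> {0<..<1}" "g x \<noteq> g y"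
  shows "uVar (\<lambda>u. g u + l * h u) > 0"
proof (rule uVar_pos_if_mono_on[OF _ _ xy(1,2)])
  show "uL2 (\<lambda>u. g u + l * h u)"
    using assms(1,2) by (intro uL2_add uL2_cmult)
  show "mono_on {0<..<1} (\<lambda>u. g u + l * h u)"
    using mono \<open>0 \<le> l\<close> by (rule mono_on_pencil)
  have lh: "mono_on {0<..<1} (\<lambda>u. l * h u)"
    using mono(2) \<open>0 \<le> l\<close> by (auto intro!: mono_onI mult_left_mono dest: mono_onD)
  show "g x + l * h x \<noteq> g y + l * h y"
    using mono_on_add_eq_imp_eq[OF mono(1) lh xy(1,2)] xy(3) by blast
qed

lemma exists_ne_if_ne_uE:
  assumes "x \<in> {0<..<1}" "f x \<noteq> uE f"
  shows "\<exists>y\<in>{0<..<1}. f y \<noteq> f x"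
proof (rule ccontr)
  assume "\<not> ?thesis"
  then have "uE f = uE (\<lambda>_. f x)"
    by (intro uE_cong) auto
  with assms(2) show False
    by (simp add: uE_eq_integral)
qed

lemma continuous_on_uCorr_pencil:
  assumes "uL2 f" "uL2 g" "uL2 h" and pos: "\<And>l. l \<in> S \<Longrightarrow> uVar (\<lambda>u. g u + l * h u) > 0"
  shows "continuous_on S (\<lambda>l. uCorr f (\<lambda>u. g u + l * h u))"
proof -
  have corr: "uCorr f (\<lambda>u. g u + l * h u) = inverse (uStd f) *
      ((uCov f g + l * uCov f h) / sqrt (uVar g + 2 * l * uCov g h + l^2 * uVar h))" for l
    using uCov_lin_comb[OF assms(1-3), of 1 l] uVar_lin_comb[OF assms(2,3), of 1 l]
    by (simp add: uCorr_def uStd_def field_simps)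
  have denom_pos: "uVar g + 2 * l * uCov g h + l^2 * uVar h > 0" if "l \<in> S" for l
    using pos[OF that] uVar_lin_comb[OF assms(2,3), of 1 l] by simp
  show ?thesis
    unfolding corr by (intro continuous_on_mult_left continuous_intros) (use denom_pos in fastforce)
qed

theorem lemmaB2:
  fixes M :: "real measure" and \<gamma> :: "real \<Rightarrow> real" and \<mu> \<sigma> lam :: real
  assumes "real_distribution M" and "integrable M (\<lambda>x. x^2)"
    and "\<sigma> > 0" and "lam \<ge> 0"
    and "mono_on {0<..<1} \<gamma>"
    and "set_borel_measurable lborel {0<..<1} \<gamma>"
    and "set_integrable lborel {0<..<1} (\<lambda>u. (\<gamma> u)^2)"
    and "uE \<gamma> = 1"
    and "\<exists>u\<in>{0<..<1}. \<gamma> u \<noteq> 1"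
  shows "(\<exists>h\<in>Mset \<mu> \<sigma>. AE u in lborel. u \<in> {0<..<1} \<longrightarrow>
              h u = hsol \<gamma> (quantile (cdf M)) \<mu> \<sigma> lam u)
       \<and> (\<forall>g\<in>Mset \<mu> \<sigma>.
              uE (\<lambda>u. (\<gamma> u + lam * quantile (cdf M) u) * g u)
            \<le> uE (\<lambda>u. (\<gamma> u + lam * quantile (cdf M) u) * hsol \<gamma> (quantile (cdf M)) \<mu> \<sigma> lam u))
       \<and> (\<forall>g\<in>Mset \<mu> \<sigma>.
              uE (\<lambda>u. (\<gamma> u + lam * quantile (cdf M) u) * g u)
            = uE (\<lambda>u. (\<gamma> u + lam * quantile (cdf M) u) * hsol \<gamma> (quantile (cdf M)) \<mu> \<sigma> lam u)
            \<longrightarrow> (AE u in lborel. u \<in> {0<..<1} \<longrightarrow> g u = hsol \<gamma> (quantile (cdf M)) \<mu> \<sigma> lam u))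
       \<and> continuous_on {0..} (\<lambda>l. uCorr (quantile (cdf M)) (hsol \<gamma> (quantile (cdf M)) \<mu> \<sigma> l))"
proof -
  define Q where "Q = quantile (cdf M)"
  have Q: "uL2 Q" "mono_on {0<..<1} Q"
    using quantile_cdf_distr[OF assms(1)] assms(2)
      uL2_moments_distr(1)[OF mono_on_borel_measurable_uniform01] by (simp_all add: Q_def)
  have \<gamma>: "uL2 \<gamma>"
    using mono_on_borel_measurable_uniform01[OF assms(5)] assms(7)
    by (simp add: uL2_def set_integrable_iff_integrable_uniform01)
  obtain x where x: "x \<in> {0<..<1}" "\<gamma> x \<noteq> uE \<gamma>"
    using assms(8,9) by auto
  then obtain y where y: "y \<in> {0<..<1}" "\<gamma> y \<noteq> \<gamma> x"
    using exists_ne_if_ne_uE[OF x] by blast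
  have var_pos: "uVar (\<lambda>u. \<gamma> u + l * Q u) > 0" if "0 \<le> l" for l
    using uVar_pencil_pos[OF \<gamma> Q(1) assms(5) Q(2) that y(1) x(1) y(2)] .
  have hsol: "hsol \<gamma> Q \<mu> \<sigma> l = rescale \<mu> \<sigma> (\<lambda>u. \<gamma> u + l * Q u)" for l
    by (simp add: fun_eq_iff hsol_def rescale_def)
  have Z: "uL2 (\<lambda>u. \<gamma> u + lam * Q u)" "mono_on {0<..<1} (\<lambda>u. \<gamma> u + lam * Q u)"
    using \<gamma> Q assms(4,5) by (auto intro: mono_on_pencil)
  note solves = rescale_solves_Mset_problem[OF Z var_pos[OF assms(4)] assms(3), where \<mu>=\<mu>, folded hsol]
  have "continuous_on {0..} (\<lambda>l. uCorr Q (hsol \<gamma> Q \<mu> \<sigma> l))"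
  proof (rule continuous_on_cong[THEN iffD2, OF refl])
    show "continuous_on {0..} (\<lambda>l. uCorr Q (\<lambda>u. \<gamma> u + l * Q u))"
      using var_pos by (intro continuous_on_uCorr_pencil Q(1) \<gamma>) auto
    show "uCorr Q (hsol \<gamma> Q \<mu> \<sigma> l) = uCorr Q (\<lambda>u. \<gamma> u + l * Q u)" if "l \<in> {0..}" for l
      using that \<gamma> Q(1) var_pos assms(3) by (simp add: hsol uCorr_rescale uL2_add uL2_cmult)
  qed
  with solves show ?thesis
    unfolding Q_def[symmetric] AE_uniform01_iff by blast
qed

end
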